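(* Fix parameters $m_1,m_2,\alpha>0$. For every $(N_1^a,N_1^A,N_2^a,N_2^A)\in(0,\infty)^4$, all eigenvalues of the matrix $J_{S_L}$ have strictly negative real part.
   Context: For $(N_1^a,N_1^A,N_2^a,N_2^A)\in(0,\infty)^4$ set $p_i=\frac{N_i^A}{N_i^A+N_i^a}$, $q_i=1-p_i=\frac{N_i^a}{N_i^A+N_i^a}$ for $i=1,2$, and $R^A=\frac{\alpha m_2N_2^A}{N_1^A}$, $S^A=\frac{m_1N_1^A}{\alpha N_2^A}$, $R^a=\frac{\alpha m_2N_2^a}{N_1^a}$, $S^a=\frac{m_1N_1^a}{\alpha N_2^a}$. The $3\times3$ matrix $J_{S_L}$ is $$J_{S_L}=\begin{pmatrix}-\frac12 & \frac12(R^A-S^A) & -\frac12(R^a-S^a)\\[2pt] \frac{q_1-q_2}{2} & -(R^A+S^A)-\frac{q_1+q_2}{4} & \frac{q_1+q_2}{4}\\[2pt] \frac{p_2-p_1}{2} & \frac{p_1+p_2}{4} & -(R^a+S^a)-\frac{p_1+p_2}{4}\end{pmatrix}.$$ *)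

theory Defs
  imports Complex_Main "Jordan_Normal_Form.Char_Poly"
begin

definition JSL :: "real \<Rightarrow> real \<Rightarrow> real \<Rightarrow> real \<Rightarrow> real \<Rightarrow> real \<Rightarrow> real \<Rightarrow> real mat" where
  "JSL m1 m2 \<alpha> N1a N1A N2a N2A =
    (let p1 = N1A / (N1A + N1a); q1 = N1a / (N1A + N1a);
         p2 = N2A / (N2A + N2a); q2 = N2a / (N2A + N2a);
         RA = \<alpha> * m2 * N2A / N1A; SA = m1 * N1A / (\<alpha> * N2A);
         Ra = \<alpha> * m2 * N2a / N1a; Sa = m1 * N1a / (\<alpha> * N2a)
     in mat_of_rows_list 3
       [[-1/2, (RA - SA)/2, -(Ra - Sa)/2],
        [(q1 - q2)/2, -(RA + SA) - (q1 + q2)/4, (q1 + q2)/4],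
        [(p2 - p1)/2, (p1 + p2)/4, -(Ra + Sa) - (p1 + p2)/4]])"

end

theory Submission
  imports Defs
begin

text \<open>By the Routh--Hurwitz criterion, all roots of a real cubic \<open>z\<^sup>3 + a\<^sub>2 z\<^sup>2 + a\<^sub>1 z + a\<^sub>0\<close>
  lie in the open left half plane as soon as \<open>a\<^sub>2 > 0\<close>, \<open>a\<^sub>0 > 0\<close> and \<open>a\<^sub>2 a\<^sub>1 > a\<^sub>0\<close>.
  For \<open>J\<^sub>S\<^sub>L\<close> these coefficients are \<open>-tr J\<close>, the sum of the principal \<open>2\<times>2\<close> minors and \<open>-det J\<close>.
  In terms of \<open>x = R\<^sup>A + S\<^sup>A\<close>, \<open>y = R\<^sup>a + S\<^sup>a\<close>, \<open>u = R\<^sup>A - S\<^sup>A\<close>, \<open>w = R\<^sup>a - S\<^sup>a\<close> and the \<open>q\<^sub>i\<close>,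
  the only terms of indefinite sign carry a factor \<open>u\<close> or \<open>w\<close> together with \<open>d = (q\<^sub>1 - q\<^sub>2)/2\<close>;
  since \<open>|u| < x\<close>, \<open>|w| < y\<close> and \<open>|d| < min (1/2) (min (q\<^sub>1 + q\<^sub>2) (2 - q\<^sub>1 - q\<^sub>2) / 2)\<close>,
  they are dominated by the positive terms.\<close>

lemma det_2x2:
  fixes A :: "'a::comm_ring_1 mat"
  assumes "A \<in> carrier_mat 2 2"
  shows "det A = A $$ (0,0) * A $$ (1,1) - A $$ (0,1) * A $$ (1,0)"
proof -
  have "det A = (\<Sum>j<2. A $$ (0,j) * cofactor A 0 j)"
    by (rule laplace_expansion_row[OF assms]) simp
  then show ?thesis
    using assms by (simp add: cofactor_def numeral_2_eq_2 det_single mat_delete_def lessThan_Suc)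
qed

lemma det_3x3:
  fixes A :: "'a::comm_ring_1 mat"
  assumes A: "A \<in> carrier_mat 3 3"
  shows "det A = A $$ (0,0) * (A $$ (1,1) * A $$ (2,2) - A $$ (1,2) * A $$ (2,1))
     - A $$ (0,1) * (A $$ (1,0) * A $$ (2,2) - A $$ (1,2) * A $$ (2,0))
     + A $$ (0,2) * (A $$ (1,0) * A $$ (2,1) - A $$ (1,1) * A $$ (2,0))"
proof -
  have "det A = (\<Sum>j<3. A $$ (0,j) * cofactor A 0 j)"
    by (rule laplace_expansion_row[OF A]) simp
  also have "\<dots> = A $$ (0,0) * cofactor A 0 0 + A $$ (0,1) * cofactor A 0 1 + A $$ (0,2) * cofactor A 0 2"
    by (simp add: numeral_3_eq_3 lessThan_Suc numeral_2_eq_2 ac_simps)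
  finally show ?thesis
    using A by (simp add: cofactor_def det_2x2 mat_delete_def numeral_2_eq_2 numeral_3_eq_3 algebra_simps)
qed

definition trace3 :: "'a::comm_ring_1 mat \<Rightarrow> 'a" where
  "trace3 A = A $$ (0,0) + A $$ (1,1) + A $$ (2,2)"

definition principal_minor_sum3 :: "'a::comm_ring_1 mat \<Rightarrow> 'a" where
  "principal_minor_sum3 A = A $$ (0,0) * A $$ (1,1) - A $$ (0,1) * A $$ (1,0)
     + A $$ (0,0) * A $$ (2,2) - A $$ (0,2) * A $$ (2,0)
     + A $$ (1,1) * A $$ (2,2) - A $$ (1,2) * A $$ (2,1)"

lemma det_char_matrix_3x3:
  fixes A :: "'a::field mat"
  assumes A: "A \<in> carrier_mat 3 3"
  shows "det (char_matrix A z) = det A - principal_minor_sum3 A * z + trace3 A * z^2 - z^3"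
proof -
  have entry: "char_matrix A z $$ (i,j) = A $$ (i,j) - (if i = j then z else 0)" if "i < 3" "j < 3" for i j
    using that A unfolding char_matrix_def by auto
  show ?thesis
    unfolding det_3x3[OF A] det_3x3[OF char_matrix_closed[OF A]] trace3_def principal_minor_sum3_def
    by (simp add: entry algebra_simps power2_eq_square power3_eq_cube)
qed

lemma cubic_root_Re_neg:
  fixes z :: complex and a2 a1 a0 :: real
  assumes root: "z^3 + of_real a2 * z^2 + of_real a1 * z + of_real a0 = 0"
    and "a2 > 0" and "a0 > 0" and "a2 * a1 > a0"
  shows "Re z < 0"
proof (rule ccontr)
  assume "\<not> Re z < 0"
  moreover obtain x y where z: "z = Complex x y"
    using complex.exhaust by blast
  ultimately have x: "x \<ge> 0" by simp
  have a1: "a1 > 0"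
    using assms(2-4) by (smt (verit) mult_nonneg_nonpos)
  have root': "z*z*z + of_real a2 * (z*z) + of_real a1 * z + of_real a0 = 0"
    using root by (simp add: power2_eq_square power3_eq_cube)
  have re: "x*x*x - 3*x*(y*y) + a2*(x*x) - a2*(y*y) + a1*x + a0 = 0"
    using arg_cong[OF root', of Re] z by (simp add: algebra_simps)
  have im: "y * (3*x*x - y*y + 2*a2*x + a1) = 0"
    using arg_cong[OF root', of Im] z by (simp add: algebra_simps)
  have nonneg: "x*x*x \<ge> 0" "a2*(x*x) \<ge> 0" "a1*x \<ge> 0" "a2*a2*x \<ge> 0"
    using x assms(2) a1 by simp_all
  show False
  proof (cases "y = 0")
    case True
    then show False using re nonneg assms(3) by simp
  next
    case False
    then have "y*y = 3*x*x + 2*a2*x + a1" using im by simp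
    then have "8*(x*x*x) + 8*a2*(x*x) + 2*(a1*x) + 2*(a2*a2*x) + (a1*a2 - a0) = 0"
      using re by (simp add: algebra_simps)
    then show False using nonneg assms(4) by (simp add: algebra_simps)
  qed
qed

lemma eigenvalue_Re_neg_3x3:
  fixes A :: "real mat"
  assumes A: "A \<in> carrier_mat 3 3"
    and "trace3 A < 0" and "det A < 0" and "trace3 A * principal_minor_sum3 A < det A"
    and "eigenvalue (map_mat complex_of_real A) z"
  shows "Re z < 0"
proof -
  have cA: "map_mat complex_of_real A \<in> carrier_mat 3 3" using A by simp
  have "trace3 (map_mat complex_of_real A) = of_real (trace3 A)"
    "principal_minor_sum3 (map_mat complex_of_real A) = of_real (principal_minor_sum3 A)"
    using A by (simp_all add: trace3_def principal_minor_sum3_def)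
  then have "det (map_mat complex_of_real A) - of_real (principal_minor_sum3 A) * z
      + of_real (trace3 A) * z^2 - z^3 = 0"
    using assms(5) det_char_matrix_3x3[OF cA] eigenvalue_det[OF cA] by simp
  then have "z^3 + of_real (- trace3 A) * z^2 + of_real (principal_minor_sum3 A) * z + of_real (- det A) = 0"
    by (simp add: algebra_simps)
  then show ?thesis
    by (rule cubic_root_Re_neg) (use assms(2-4) in auto)
qed

text \<open>\<open>J\<^sub>S\<^sub>L\<close> with \<open>p\<^sub>i = 1 - q\<^sub>i\<close> eliminated, in the variables \<open>x, y, u, w\<close> above.\<close>

definition JSL_reduced :: "real \<Rightarrow> real \<Rightarrow> real \<Rightarrow> real \<Rightarrow> real \<Rightarrow> real \<Rightarrow> real mat" where
  "JSL_reduced x y u w q1 q2 = mat_of_rows_list 3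
     [[-1/2, u/2, -w/2],
      [(q1 - q2)/2, -x - (q1 + q2)/4, (q1 + q2)/4],
      [(q1 - q2)/2, (2 - q1 - q2)/4, -y - (2 - q1 - q2)/4]]"

lemma JSL_reduced_carrier: "JSL_reduced x y u w q1 q2 \<in> carrier_mat 3 3"
  unfolding JSL_reduced_def mat_of_rows_list_def by auto

lemma JSL_reduced_index:
  "JSL_reduced x y u w q1 q2 $$ (i, j) = [[-1/2, u/2, -w/2],
      [(q1 - q2)/2, -x - (q1 + q2)/4, (q1 + q2)/4],
      [(q1 - q2)/2, (2 - q1 - q2)/4, -y - (2 - q1 - q2)/4]] ! i ! j" if "i < 3" "j < 3"
  using that unfolding JSL_reduced_def mat_of_rows_list_def by auto

lemma JSL_eq_JSL_reduced:
  assumes "N1A + N1a \<noteq> 0" and "N2A + N2a \<noteq> 0"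
  shows "JSL m1 m2 \<alpha> N1a N1A N2a N2A =
    JSL_reduced (\<alpha> * m2 * N2A / N1A + m1 * N1A / (\<alpha> * N2A)) (\<alpha> * m2 * N2a / N1a + m1 * N1a / (\<alpha> * N2a))
      (\<alpha> * m2 * N2A / N1A - m1 * N1A / (\<alpha> * N2A)) (\<alpha> * m2 * N2a / N1a - m1 * N1a / (\<alpha> * N2a))
      (N1a / (N1A + N1a)) (N2a / (N2A + N2a))"
proof -
  have p: "N1A / (N1A + N1a) = 1 - N1a / (N1A + N1a)" "N2A / (N2A + N2a) = 1 - N2a / (N2A + N2a)"
    using assms by (simp_all add: field_simps)
  show ?thesis unfolding JSL_def JSL_reduced_def Let_def p by (simp add: algebra_simps)
qed

lemma JSL_reduced_coefficients:
  fixes x y u w q1 q2 :: real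
  defines "J \<equiv> JSL_reduced x y u w q1 q2"
    and "s \<equiv> (q1 + q2)/4" and "t \<equiv> (2 - q1 - q2)/4" and "d \<equiv> (q1 - q2)/2"
  shows "trace3 J = - (x + y + 1)"
    and "principal_minor_sum3 J = (x + y + 1/2)/2 + x*y + x*t + y*s + d/2 * (w - u)"
    and "det J = - ((x*y + x*t + y*s)/2 + d/2 * (w * (x + 1/2) - u * (y + 1/2)))"
  unfolding J_def s_def t_def d_def trace3_def principal_minor_sum3_def det_3x3[OF JSL_reduced_carrier]
  by (simp_all add: JSL_reduced_index field_simps)

lemma JSL_reduced_Routh_Hurwitz:
  fixes x y u w q1 q2 :: real
  assumes x: "\<bar>u\<bar> < x" and y: "\<bar>w\<bar> < y"
    and q1: "0 < q1" "q1 < 1" and q2: "0 < q2" "q2 < 1"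
  defines "J \<equiv> JSL_reduced x y u w q1 q2"
  shows "trace3 J < 0" and "det J < 0" and "trace3 J * principal_minor_sum3 J < det J"
proof -
  define s where "s = (q1 + q2)/4"
  define t where "t = (2 - q1 - q2)/4"
  define d where "d = (q1 - q2)/2"
  define e where "e = \<bar>d\<bar>"
  define a0 where "a0 = (x*y + x*t + y*s)/2 + d/2 * (w * (x + 1/2) - u * (y + 1/2))"
  define a1 where "a1 = (x + y + 1/2)/2 + x*y + x*t + y*s + d/2 * (w - u)"
  have coeffs: "trace3 J = - (x + y + 1)" "principal_minor_sum3 J = a1" "det J = - a0"
    unfolding J_def a0_def a1_def s_def t_def d_def by (rule JSL_reduced_coefficients)+
  have pos: "x > 0" "y > 0" "x*y > 0"
    using x y by auto
  have e: "e < 1/2" "e < 2*s" "e < 2*t" "0 < s" "0 < t"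
    using q1 q2 unfolding e_def d_def s_def t_def by (auto split: abs_split)
  have dw: "\<bar>d*w\<bar> \<le> e*y" and du: "\<bar>d*u\<bar> \<le> e*x"
    using x y unfolding e_def by (simp_all add: abs_mult mult_left_mono)
  have "2*a0 = x*y*(1 - 2*e) + x*(t - e/2) + y*(s - e/2) + (x + 1/2)*(e*y + d*w) + (y + 1/2)*(e*x - d*u)"
    unfolding a0_def by (simp add: algebra_simps)
  moreover have "x*y*(1 - 2*e) > 0" "x*(t - e/2) > 0" "y*(s - e/2) > 0"
    using pos e by simp_all
  moreover have "(x + 1/2)*(e*y + d*w) \<ge> 0" "(y + 1/2)*(e*x - d*u) \<ge> 0"
    using pos dw du by simp_all
  ultimately have a0: "a0 > 0" by linarith
  have "e*y \<le> 1/2*y" "e*x \<le> 1/2*x"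
    using e pos by (simp_all add: mult_right_mono)
  then have "\<bar>d*w\<bar> \<le> y/2" "\<bar>d*u\<bar> \<le> x/2"
    using dw du by simp_all
  then have "(y + 1/2)*(y/4 + d*w/2) \<ge> 0" "(x + 1/2)*(x/4 - d*u/2) \<ge> 0"
    using pos by (simp_all add: abs_le_iff)
  moreover have "(x*x + y*y)/4 + x*y + 5*(x + y)/8 + 1/4 > 0"
    using pos by (simp add: add_pos_pos add_nonneg_pos)
  moreover have "(x + y + 1/2)*(x*y + x*t + y*s) \<ge> 0"
    using pos e by simp
  moreover have "(x + y + 1)*a1 - a0 = (x*x + y*y)/4 + x*y + 5*(x + y)/8 + 1/4
      + (x + y + 1/2)*(x*y + x*t + y*s) + (y + 1/2)*(y/4 + d*w/2) + (x + 1/2)*(x/4 - d*u/2)"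
    unfolding a0_def a1_def by (simp add: field_simps)
  ultimately have "(x + y + 1)*a1 > a0" by linarith
  then show "trace3 J < 0" "det J < 0" "trace3 J * principal_minor_sum3 J < det J"
    unfolding coeffs using a0 pos by (simp_all add: algebra_simps)
qed

theorem mainTheorem6:
  fixes m1 m2 \<alpha> N1a N1A N2a N2A :: real and z :: complex
  assumes "m1 > 0" and "m2 > 0" and "\<alpha> > 0"
    and "N1a > 0" and "N1A > 0" and "N2a > 0" and "N2A > 0"
    and "eigenvalue (map_mat complex_of_real (JSL m1 m2 \<alpha> N1a N1A N2a N2A)) z"
  shows "Re z < 0"
proof -
  define RA where "RA = \<alpha> * m2 * N2A / N1A"
  define SA where "SA = m1 * N1A / (\<alpha> * N2A)"
  define Ra where "Ra = \<alpha> * m2 * N2a / N1a"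
  define Sa where "Sa = m1 * N1a / (\<alpha> * N2a)"
  define q1 where "q1 = N1a / (N1A + N1a)"
  define q2 where "q2 = N2a / (N2A + N2a)"
  have J: "JSL m1 m2 \<alpha> N1a N1A N2a N2A = JSL_reduced (RA + SA) (Ra + Sa) (RA - SA) (Ra - Sa) q1 q2"
    unfolding RA_def SA_def Ra_def Sa_def q1_def q2_def using assms by (intro JSL_eq_JSL_reduced) auto
  have "RA > 0" "SA > 0" "Ra > 0" "Sa > 0"
    unfolding RA_def SA_def Ra_def Sa_def using assms by simp_all
  then have "\<bar>RA - SA\<bar> < RA + SA" "\<bar>Ra - Sa\<bar> < Ra + Sa" by auto
  moreover have "0 < q1" "q1 < 1" "0 < q2" "q2 < 1"
    unfolding q1_def q2_def using assms by (simp_all add: field_simps)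
  ultimately show ?thesis
    using assms(8) unfolding J
    by (intro eigenvalue_Re_neg_3x3[OF JSL_reduced_carrier] JSL_reduced_Routh_Hurwitz)
qed

end
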